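(* ${\bf KB^\boxdot}$ is strongly complete with respect to the class of symmetric bimodal frames: every ${\bf KB^\boxdot}$-consistent set of $\mathcal{L}(\boxdot)$-formulas is satisfiable at some state of some bimodal model in which both $R_1$ and $R_2$ are symmetric.
   Context: Fix a nonempty set $\mathbf{P}$ of propositional variables. A bimodal model is $\langle S,R_1,R_2,V\rangle$ with $S$ nonempty, $R_1,R_2\subseteq S\times S$, $V:\mathbf{P}\to\mathcal{P}(S)$. $\mathcal{L}(\boxdot):\ \phi::=p\mid\neg\phi\mid(\phi\wedge\phi)\mid\boxdot\phi$. Truth: $\mathcal{M},s\vDash\boxdot\phi$ iff for all $t,u$ with $sR_1t$ and $sR_2u$, ($\mathcal{M},t\vDash\phi\iff\mathcal{M},u\vDash\phi$); atoms and Booleans as usual. ${\bf K^\boxdot}$ has axioms: all instances of propositional tautologies; $\boxdot\top$; $\boxdot\phi\leftrightarrow\boxdot\neg\phi$; $\boxdot\phi\wedge\boxdot\psi\to\boxdot(\phi\wedge\psi)$; $\boxdot\phi\to\boxdot(\phi\vee\psi)\vee\boxdot(\neg\phi\vee\chi)$; rules: modus ponens and RE: from $\phi\leftrightarrow\psi$ infer $\boxdot\phi\leftrightarrow\boxdot\psi$. ${\bf KB^\boxdot}$ is ${\bf K^\boxdot}$ plus the axiom schema $\phi\to\boxdot((\boxdot\phi\wedge\boxdot(\phi\to\psi)\wedge\neg\boxdot\psi)\to\chi)$. A set is consistent if no finite conjunction of its members has a provable negation. *)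

theory Defs
  imports Main
begin

datatype 'p fm = Atom 'p | Neg "'p fm" | Conj "'p fm" "'p fm" | Dot "'p fm"

definition Disj :: "'p fm \<Rightarrow> 'p fm \<Rightarrow> 'p fm" where
  "Disj a b = Neg (Conj (Neg a) (Neg b))"
definition Imp :: "'p fm \<Rightarrow> 'p fm \<Rightarrow> 'p fm" where
  "Imp a b = Neg (Conj a (Neg b))"
definition Iff :: "'p fm \<Rightarrow> 'p fm \<Rightarrow> 'p fm" where
  "Iff a b = Conj (Imp a b) (Imp b a)"
text \<open>A fixed tautology (P is a nonempty type, we use some fixed atom).\<close>
definition Top :: "'p fm" where
  "Top = Neg (Conj (Atom undefined) (Neg (Atom undefined)))"

fun peval :: "('p fm \<Rightarrow> bool) \<Rightarrow> 'p fm \<Rightarrow> bool" where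
  "peval h (Atom p) = h (Atom p)"
| "peval h (Neg a) = (\<not> peval h a)"
| "peval h (Conj a b) = (peval h a \<and> peval h b)"
| "peval h (Dot a) = h (Dot a)"

definition tautology :: "'p fm \<Rightarrow> bool" where
  "tautology \<phi> \<longleftrightarrow> (\<forall>h. peval h \<phi>)"

inductive KBd :: "'p fm \<Rightarrow> bool" where
  Taut: "tautology \<phi> \<Longrightarrow> KBd \<phi>"
| DotTop: "KBd (Dot Top)"
| DotNeg: "KBd (Iff (Dot \<phi>) (Dot (Neg \<phi>)))"
| DotConj: "KBd (Imp (Conj (Dot \<phi>) (Dot \<psi>)) (Dot (Conj \<phi> \<psi>)))"
| DotDisj: "KBd (Imp (Dot \<phi>) (Disj (Dot (Disj \<phi> \<psi>)) (Dot (Disj (Neg \<phi>) \<chi>))))"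
| AxB: "KBd (Imp \<phi> (Dot (Imp (Conj (Conj (Dot \<phi>) (Dot (Imp \<phi> \<psi>))) (Neg (Dot \<psi>))) \<chi>)))"
| MP: "KBd \<phi> \<Longrightarrow> KBd (Imp \<phi> \<psi>) \<Longrightarrow> KBd \<psi>"
| RE: "KBd (Iff \<phi> \<psi>) \<Longrightarrow> KBd (Iff (Dot \<phi>) (Dot \<psi>))"

fun conjs :: "'p fm list \<Rightarrow> 'p fm" where
  "conjs [] = Top"
| "conjs [x] = x"
| "conjs (x # xs) = Conj x (conjs xs)"

definition KBd_consistent :: "'p fm set \<Rightarrow> bool" where
  "KBd_consistent \<Gamma> \<longleftrightarrow> \<not> (\<exists>xs. set xs \<subseteq> \<Gamma> \<and> KBd (Neg (conjs xs)))"

fun sat :: "('s \<times> 's) set \<Rightarrow> ('s \<times> 's) set \<Rightarrow> ('p \<Rightarrow> 's set) \<Rightarrow> 's \<Rightarrow> 'p fm \<Rightarrow> bool" where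
  "sat R1 R2 V s (Atom p) = (s \<in> V p)"
| "sat R1 R2 V s (Neg a) = (\<not> sat R1 R2 V s a)"
| "sat R1 R2 V s (Conj a b) = (sat R1 R2 V s a \<and> sat R1 R2 V s b)"
| "sat R1 R2 V s (Dot a) =
     (\<forall>t u. (s, t) \<in> R1 \<longrightarrow> (s, u) \<in> R2 \<longrightarrow> (sat R1 R2 V t a \<longleftrightarrow> sat R1 R2 V u a))"

definition bimodal_model :: "'s set \<Rightarrow> ('s \<times> 's) set \<Rightarrow> ('s \<times> 's) set \<Rightarrow> ('p \<Rightarrow> 's set) \<Rightarrow> bool" where
  "bimodal_model S R1 R2 V \<longleftrightarrow> S \<noteq> {} \<and> R1 \<subseteq> S \<times> S \<and> R2 \<subseteq> S \<times> S \<and> (\<forall>p. V p \<subseteq> S)"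

end

theory Submission
  imports Defs
begin

text \<open>
  A canonical model argument. Call \<open>N\<close> accessible from a maximal consistent set \<open>M\<close> if for some \<open>\<chi>\<close>
  with \<open>\<boxdot>\<chi> \<notin> M\<close>, \<open>N\<close> contains every \<open>\<phi>\<close> with \<open>\<boxdot>\<phi>, \<boxdot>(\<chi> \<rightarrow> \<phi>) \<in> M\<close>.
  Using the axiom \<open>\<boxdot>\<phi> \<rightarrow> \<boxdot>(\<phi> \<or> \<psi>) \<or> \<boxdot>(\<not>\<phi> \<or> \<chi>)\<close>, all sets accessible from \<open>M\<close> agree on
  \<open>\<phi>\<close> whenever \<open>\<boxdot>\<phi> \<in> M\<close>; by Lindenbaum, if \<open>\<boxdot>\<phi> \<notin> M\<close> there are accessible sets containing
  \<open>\<phi>\<close> and \<open>\<not>\<phi>\<close>. Axiom B makes accessibility symmetric between sets that do not contain all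
  \<open>\<boxdot>\<close>-formulas. The remaining ``dead'' sets must satisfy every \<open>\<boxdot>\<phi>\<close>, which holds if one of
  their two relations is empty; so every set is duplicated, and each copy of a dead set is
  entered along one relation only, which survives taking symmetric closures.
\<close>

lemma peval_Top [simp]: "peval h Top"
  by (simp add: Top_def)

lemma peval_conjs [simp]: "peval h (conjs xs) = (\<forall>x\<in>set xs. peval h x)"
  by (induction xs rule: conjs.induct) auto

lemma peval_foldr_Conj [simp]: "peval h (foldr Conj ys Top) = (\<forall>x\<in>set ys. peval h x)"
  by (induction ys) auto

lemma peval_connectives [simp]:
  "peval h (Disj a b) = (peval h a \<or> peval h b)"
  "peval h (Imp a b) = (peval h a \<longrightarrow> peval h b)"
  "peval h (Iff a b) = (peval h a \<longleftrightarrow> peval h b)"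
  by (auto simp: Disj_def Imp_def Iff_def)

lemma KBd_prop_consequence:
  assumes "\<forall>x\<in>set xs. KBd x" and "\<forall>h. (\<forall>x\<in>set xs. peval h x) \<longrightarrow> peval h y"
  shows "KBd y"
  using assms
proof (induction xs arbitrary: y)
  case Nil
  then show ?case by (auto intro: KBd.Taut simp: tautology_def)
next
  case (Cons x xs)
  then have "KBd (Imp x y)" by auto
  with Cons.prems(1) show ?case by (auto intro: KBd.MP)
qed

lemma KBd_tautology: "(\<And>h. peval h y) \<Longrightarrow> KBd y"
  using KBd_prop_consequence[of "[]" y] by auto

lemma KBd_prop_mp: "KBd a \<Longrightarrow> (\<And>h. peval h a \<Longrightarrow> peval h y) \<Longrightarrow> KBd y"
  using KBd_prop_consequence[of "[a]" y] by auto

section \<open>Maximal consistent sets\<close>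

definition MCS :: "'p fm set \<Rightarrow> bool" where
  "MCS M \<longleftrightarrow> KBd_consistent M \<and> (\<forall>\<phi>. \<phi> \<notin> M \<longrightarrow> \<not> KBd_consistent (insert \<phi> M))"

lemma Lindenbaum:
  assumes "KBd_consistent \<Gamma>"
  shows "\<exists>M. \<Gamma> \<subseteq> M \<and> MCS M"
proof -
  let ?A = "{D. \<Gamma> \<subseteq> D \<and> KBd_consistent D}"
  have "\<exists>M\<in>?A. \<forall>X\<in>?A. M \<subseteq> X \<longrightarrow> X = M"
  proof (rule subset_Zorn_nonempty)
    show "?A \<noteq> {}" using assms by auto
  next
    fix C assume C: "C \<noteq> {}" "subset.chain ?A C"
    have "KBd_consistent (\<Union>C)"
      unfolding KBd_consistent_def
    proof
      assume "\<exists>xs. set xs \<subseteq> \<Union>C \<and> KBd (Neg (conjs xs))"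
      then obtain xs where xs: "set xs \<subseteq> \<Union>C" "KBd (Neg (conjs xs))" by auto
      then obtain X where "X \<in> C" "set xs \<subseteq> X"
        using finite_subset_Union_chain[OF _ _ C] by blast
      with C(2) xs show False unfolding subset.chain_def KBd_consistent_def by blast
    qed
    moreover have "\<Gamma> \<subseteq> \<Union>C" using C unfolding subset.chain_def by blast
    ultimately show "\<Union>C \<in> ?A" by auto
  qed
  then obtain M where "M \<in> ?A" and max: "\<forall>X\<in>?A. M \<subseteq> X \<longrightarrow> X = M" by blast
  moreover have "\<not> KBd_consistent (insert \<phi> M)" if "\<phi> \<notin> M" for \<phi>
    using max \<open>M \<in> ?A\<close> that by blast
  ultimately show ?thesis unfolding MCS_def by blast
qed

lemma inconsistent_insert:
  assumes "\<not> KBd_consistent (insert \<phi> M)"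
  shows "\<exists>xs. set xs \<subseteq> M \<and> KBd (Imp (conjs xs) (Neg \<phi>))"
proof -
  obtain ys where ys: "set ys \<subseteq> insert \<phi> M" "KBd (Neg (conjs ys))"
    using assms unfolding KBd_consistent_def by auto
  have "KBd (Imp (conjs (removeAll \<phi> ys)) (Neg \<phi>))"
    using ys(2) by (rule KBd_prop_mp) (use ys(1) in auto)
  moreover have "set (removeAll \<phi> ys) \<subseteq> M" using ys by auto
  ultimately show ?thesis by blast
qed

lemma MCS_Neg_cases:
  assumes "MCS M" shows "\<phi> \<in> M \<or> Neg \<phi> \<in> M"
proof (rule ccontr)
  assume "\<not> ?thesis"
  then have "\<not> KBd_consistent (insert \<phi> M)" "\<not> KBd_consistent (insert (Neg \<phi>) M)"
    using assms unfolding MCS_def by auto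
  then obtain xs ys where "set xs \<subseteq> M" and xs: "KBd (Imp (conjs xs) (Neg \<phi>))"
    and "set ys \<subseteq> M" and ys: "KBd (Imp (conjs ys) (Neg (Neg \<phi>)))"
    using inconsistent_insert by metis
  moreover have "KBd (Neg (conjs (xs @ ys)))"
    by (rule KBd_prop_consequence[of "[Imp (conjs xs) (Neg \<phi>), Imp (conjs ys) (Neg (Neg \<phi>))]"])
      (use xs ys in auto)
  ultimately show False using assms unfolding MCS_def KBd_consistent_def by auto
qed

lemma MCS_prop_closed:
  assumes "MCS M" "set xs \<subseteq> M" "\<And>h. \<forall>x\<in>set xs. peval h x \<Longrightarrow> peval h y"
  shows "y \<in> M"
proof (rule ccontr)
  assume "y \<notin> M"
  then have "set (Neg y # xs) \<subseteq> M" using MCS_Neg_cases[OF assms(1)] assms(2) by auto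
  moreover have "KBd (Neg (conjs (Neg y # xs)))" by (rule KBd_tautology) (use assms(3) in auto)
  ultimately show False using assms(1) unfolding MCS_def KBd_consistent_def by blast
qed

lemma MCS_KBd:
  assumes "MCS M" "KBd a" shows "a \<in> M"
proof (rule ccontr)
  assume "a \<notin> M"
  then have "set [Neg a] \<subseteq> M" using MCS_Neg_cases[OF assms(1)] by auto
  moreover have "KBd (Neg (conjs [Neg a]))" using assms(2) by (rule KBd_prop_mp) simp
  ultimately show False using assms(1) unfolding MCS_def KBd_consistent_def by blast
qed

lemma MCS_mp: "MCS M \<Longrightarrow> KBd (Imp a b) \<Longrightarrow> a \<in> M \<Longrightarrow> b \<in> M"
  using MCS_prop_closed[of M "[Imp a b, a]" b] MCS_KBd by auto

lemma MCS_Neg: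
  assumes "MCS M" shows "Neg a \<in> M \<longleftrightarrow> a \<notin> M"
proof
  assume "Neg a \<in> M"
  show "a \<notin> M"
  proof
    assume "a \<in> M"
    with \<open>Neg a \<in> M\<close> have "set [a, Neg a] \<subseteq> M" by simp
    moreover have "KBd (Neg (conjs [a, Neg a]))" by (rule KBd_tautology) simp
    ultimately show False using assms unfolding MCS_def KBd_consistent_def by blast
  qed
qed (use MCS_Neg_cases[OF assms] in blast)

lemma MCS_Conj:
  assumes "MCS M" shows "Conj a b \<in> M \<longleftrightarrow> a \<in> M \<and> b \<in> M"
proof
  assume "Conj a b \<in> M"
  then show "a \<in> M \<and> b \<in> M"
    using MCS_prop_closed[OF assms, of "[Conj a b]"] by simp
next
  assume "a \<in> M \<and> b \<in> M"
  then show "Conj a b \<in> M"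
    by (intro MCS_prop_closed[OF assms, of "[a, b]"]) simp_all
qed

lemma MCS_Disj:
  assumes "MCS M" "Disj a b \<in> M" shows "a \<in> M \<or> b \<in> M"
proof (cases "a \<in> M")
  case False
  then have "Neg a \<in> M" using MCS_Neg[OF assms(1)] by blast
  with assms have "b \<in> M" by (intro MCS_prop_closed[OF assms(1), of "[Disj a b, Neg a]"]) auto
  then show ?thesis ..
qed simp

context
  fixes M :: "'p fm set"
  assumes M: "MCS M"
begin

lemma Dot_Neg_iff: "Dot (Neg a) \<in> M \<longleftrightarrow> Dot a \<in> M"
proof -
  have ax: "Iff (Dot a) (Dot (Neg a)) \<in> M" by (rule MCS_KBd[OF M KBd.DotNeg])
  show ?thesis
  proof
    assume "Dot (Neg a) \<in> M"
    with ax show "Dot a \<in> M"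
      by (intro MCS_prop_closed[OF M, of "[Iff (Dot a) (Dot (Neg a)), Dot (Neg a)]"]) auto
  next
    assume "Dot a \<in> M"
    with ax show "Dot (Neg a) \<in> M"
      by (intro MCS_prop_closed[OF M, of "[Iff (Dot a) (Dot (Neg a)), Dot a]"]) auto
  qed
qed

lemma Dot_Conj: "Dot a \<in> M \<Longrightarrow> Dot b \<in> M \<Longrightarrow> Dot (Conj a b) \<in> M"
  by (rule MCS_mp[OF M KBd.DotConj]) (simp add: MCS_Conj[OF M])

lemma Dot_RE:
  assumes "KBd (Iff a b)" and "Dot a \<in> M" shows "Dot b \<in> M"
proof -
  have "Iff (Dot a) (Dot b) \<in> M" by (rule MCS_KBd[OF M KBd.RE[OF assms(1)]])
  with assms(2) show ?thesis
    by (intro MCS_prop_closed[OF M, of "[Iff (Dot a) (Dot b), Dot a]"]) auto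
qed

lemma Dot_prop_cong: "Dot a \<in> M \<Longrightarrow> (\<And>h. peval h a = peval h b) \<Longrightarrow> Dot b \<in> M"
  by (rule Dot_RE) (auto intro: KBd_tautology)

lemma Dot_Top: "Dot Top \<in> M"
  using MCS_KBd[OF M KBd.DotTop] .

lemma Dot_Disj: "Dot a \<in> M \<Longrightarrow> Dot b \<in> M \<Longrightarrow> Dot (Disj a b) \<in> M"
  unfolding Disj_def Dot_Neg_iff by (intro Dot_Conj) (simp_all add: Dot_Neg_iff)

lemma Dot_Disj_cases: "Dot \<phi> \<in> M \<Longrightarrow> Dot (Disj \<phi> \<psi>) \<in> M \<or> Dot (Disj (Neg \<phi>) \<chi>) \<in> M"
  using MCS_Disj[OF M] MCS_mp[OF M KBd.DotDisj] by blast

lemma Dot_Imp_cases: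
  assumes "Dot \<phi> \<in> M"
  shows "Dot (Imp \<chi> \<phi>) \<in> M \<or> Dot (Imp \<chi> (Neg \<phi>)) \<in> M"
  using Dot_Disj_cases[OF assms, of "Neg \<chi>" "Neg \<chi>"]
proof
  assume "Dot (Disj \<phi> (Neg \<chi>)) \<in> M"
  then have "Dot (Imp \<chi> \<phi>) \<in> M" by (rule Dot_prop_cong) auto
  then show ?thesis ..
next
  assume "Dot (Disj (Neg \<phi>) (Neg \<chi>)) \<in> M"
  then have "Dot (Imp \<chi> (Neg \<phi>)) \<in> M" by (rule Dot_prop_cong) auto
  then show ?thesis ..
qed

lemma Dot_foldr_Conj:
  assumes "set ys \<subseteq> {\<psi>. Dot \<psi> \<in> M \<and> Dot (Imp \<phi> \<psi>) \<in> M}"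
  shows "Dot (Imp \<phi> (foldr Conj ys Top)) \<in> M \<and> Dot (foldr Conj ys Top) \<in> M"
  using assms
proof (induction ys)
  case Nil
  have "Dot (Imp \<phi> Top) \<in> M" using Dot_Top by (rule Dot_prop_cong) simp
  then show ?case using Dot_Top by simp
next
  case (Cons y ys)
  then have "Dot (Conj (Imp \<phi> y) (Imp \<phi> (foldr Conj ys Top))) \<in> M"
    and "Dot (Conj y (foldr Conj ys Top)) \<in> M"
    using Dot_Conj by auto
  moreover from this(1) have "Dot (Imp \<phi> (foldr Conj (y # ys) Top)) \<in> M"
    by (rule Dot_prop_cong) auto
  ultimately show ?case by simp
qed

lemma MCS_AxB:
  "\<phi> \<in> M \<Longrightarrow> Dot (Imp (Conj (Conj (Dot \<phi>) (Dot (Imp \<phi> \<psi>))) (Neg (Dot \<psi>))) \<chi>) \<in> M"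
  using MCS_mp[OF M KBd.AxB] .

end

section \<open>Canonical accessibility\<close>

definition canon_acc :: "'p fm set \<Rightarrow> 'p fm set \<Rightarrow> bool" where
  "canon_acc M N \<longleftrightarrow> (\<exists>\<chi>. Dot \<chi> \<notin> M \<and> (\<forall>\<phi>. Dot \<phi> \<in> M \<and> Dot (Imp \<chi> \<phi>) \<in> M \<longrightarrow> \<phi> \<in> N))"

definition live :: "'p fm set \<Rightarrow> bool" where
  "live M \<longleftrightarrow> (\<exists>\<chi>. Dot \<chi> \<notin> M)"

lemma canon_acc_live: "canon_acc M N \<Longrightarrow> live M"
  unfolding canon_acc_def live_def by blast

lemma canon_acc_agree:
  assumes M: "MCS M" "Dot \<phi> \<in> M"
    and N: "MCS N1" "MCS N2" "canon_acc M N1" "canon_acc M N2" "\<phi> \<in> N1"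
  shows "\<phi> \<in> N2"
proof (rule ccontr)
  assume "\<phi> \<notin> N2"
  obtain \<chi>1 where c1: "Dot \<chi>1 \<notin> M" "\<And>\<psi>. Dot \<psi> \<in> M \<Longrightarrow> Dot (Imp \<chi>1 \<psi>) \<in> M \<Longrightarrow> \<psi> \<in> N1"
    using N(3) unfolding canon_acc_def by blast
  obtain \<chi>2 where c2: "Dot \<chi>2 \<notin> M" "\<And>\<psi>. Dot \<psi> \<in> M \<Longrightarrow> Dot (Imp \<chi>2 \<psi>) \<in> M \<Longrightarrow> \<psi> \<in> N2"
    using N(4) unfolding canon_acc_def by blast
  have neg: "Dot (Neg \<phi>) \<in> M" using M Dot_Neg_iff by blast
  have i1: "Dot (Imp \<chi>1 \<phi>) \<in> M"
    using Dot_Imp_cases[OF M, of \<chi>1] c1(2)[OF neg] N(1,5) MCS_Neg by blast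
  have i2: "Dot (Imp \<chi>2 (Neg \<phi>)) \<in> M"
    using Dot_Imp_cases[OF M, of \<chi>2] c2(2)[OF M(2)] \<open>\<phi> \<notin> N2\<close> by blast
  txt \<open>Either disjunct of the axiom lets us rewrite inside \<open>\<boxdot>\<close> until \<open>\<boxdot>\<chi>\<^sub>1\<close> or \<open>\<boxdot>\<chi>\<^sub>2\<close> appears.\<close>
  from Dot_Disj_cases[OF M, of \<chi>2 \<chi>1] show False
  proof
    assume "Dot (Disj \<phi> \<chi>2) \<in> M"
    then have "Dot (Disj (Conj (Disj \<phi> \<chi>2) (Neg \<phi>)) (Neg (Imp \<chi>2 (Neg \<phi>)))) \<in> M"
      using Dot_Disj[OF M(1) Dot_Conj[OF M(1) _ neg]] i2 Dot_Neg_iff[OF M(1)] by blast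
    then have "Dot \<chi>2 \<in> M" by (rule Dot_prop_cong[OF M(1)]) auto
    then show False using c2 by blast
  next
    assume "Dot (Disj (Neg \<phi>) \<chi>1) \<in> M"
    then have "Dot (Disj (Conj (Disj (Neg \<phi>) \<chi>1) \<phi>) (Neg (Imp \<chi>1 \<phi>))) \<in> M"
      using Dot_Disj[OF M(1) Dot_Conj[OF M(1) _ M(2)]] i1 Dot_Neg_iff[OF M(1)] by blast
    then have "Dot \<chi>1 \<in> M" by (rule Dot_prop_cong[OF M(1)]) auto
    then show False using c1 by blast
  qed
qed

lemma canon_acc_exists:
  assumes M: "MCS M" "Dot \<phi> \<notin> M"
  shows "\<exists>N. MCS N \<and> canon_acc M N \<and> \<phi> \<in> N"
proof -
  let ?B = "{\<psi>. Dot \<psi> \<in> M \<and> Dot (Imp \<phi> \<psi>) \<in> M}"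
  have "KBd_consistent (insert \<phi> ?B)"
    unfolding KBd_consistent_def
  proof
    assume "\<exists>xs. set xs \<subseteq> insert \<phi> ?B \<and> KBd (Neg (conjs xs))"
    then obtain xs where xs: "set xs \<subseteq> insert \<phi> ?B" "KBd (Neg (conjs xs))" by blast
    let ?c = "foldr Conj (removeAll \<phi> xs) Top"
    have "set (removeAll \<phi> xs) \<subseteq> ?B" using xs(1) by auto
    then have "Dot (Imp \<phi> ?c) \<in> M" using Dot_foldr_Conj[OF M(1)] by blast
    moreover have "KBd (Iff (Imp \<phi> ?c) (Neg \<phi>))"
      using xs(2) by (rule KBd_prop_mp) (use xs(1) in auto)
    ultimately have "Dot (Neg \<phi>) \<in> M" using Dot_RE[OF M(1)] by blast
    then show False using M Dot_Neg_iff by blast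
  qed
  then obtain N where "insert \<phi> ?B \<subseteq> N" "MCS N" using Lindenbaum by blast
  moreover from this have "canon_acc M N" unfolding canon_acc_def using M(2) by blast
  ultimately show ?thesis by blast
qed

lemma canon_acc_sym:
  assumes M: "MCS M" and N: "MCS N" and "canon_acc M N" and "live N"
  shows "canon_acc N M"
proof -
  obtain \<psi> where live: "Dot \<psi> \<notin> N" using \<open>live N\<close> unfolding live_def by blast
  obtain \<chi> where c: "Dot \<chi> \<notin> M" "\<And>\<phi>. Dot \<phi> \<in> M \<Longrightarrow> Dot (Imp \<chi> \<phi>) \<in> M \<Longrightarrow> \<phi> \<in> N"
    using \<open>canon_acc M N\<close> unfolding canon_acc_def by blast
  have "\<theta> \<in> M" if th: "Dot \<theta> \<in> N" "Dot (Imp \<psi> \<theta>) \<in> N" for \<theta>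
  proof (rule ccontr)
    assume "\<theta> \<notin> M"
    then have "Neg \<theta> \<in> M" using MCS_Neg[OF M] by blast
    define X where "X = Conj (Conj (Dot (Neg \<theta>)) (Dot (Imp (Neg \<theta>) (Neg \<psi>)))) (Neg (Dot (Neg \<psi>)))"
    txt \<open>Axiom B for \<open>\<not>\<theta> \<in> M\<close>, once with \<open>\<chi> := \<bottom>\<close> and once with \<open>\<chi> := \<not>\<chi>\<close>.\<close>
    have "Dot (Neg X) \<in> M"
      using MCS_AxB[OF M \<open>Neg \<theta> \<in> M\<close>, of _ "Neg Top"] unfolding X_def
      by (rule Dot_prop_cong[OF M]) auto
    moreover have "Dot (Imp \<chi> (Neg X)) \<in> M"
      using MCS_AxB[OF M \<open>Neg \<theta> \<in> M\<close>, of _ "Neg \<chi>"] unfolding X_def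
      by (rule Dot_prop_cong[OF M]) auto
    ultimately have "Neg X \<in> N" using c(2) by blast
    moreover have "X \<in> N"
    proof -
      have "Dot (Imp (Neg \<theta>) (Neg \<psi>)) \<in> N" using th(2) by (rule Dot_prop_cong[OF N]) auto
      moreover have "Dot (Neg \<theta>) \<in> N" using th(1) Dot_Neg_iff[OF N] by simp
      moreover have "Neg (Dot (Neg \<psi>)) \<in> N" using live Dot_Neg_iff[OF N] MCS_Neg[OF N] by simp
      ultimately show ?thesis unfolding X_def by (simp add: MCS_Conj[OF N])
    qed
    ultimately show False using MCS_Neg[OF N] by blast
  qed
  then show ?thesis unfolding canon_acc_def using live by blast
qed

section \<open>The canonical model\<close>

text \<open>The second component selects a copy; a dead copy \<open>(N, b)\<close> is a target only of
  \<open>canon_edges b\<close>, so in the symmetric closure it has successors along one relation only.\<close>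

definition canon_edges :: "bool \<Rightarrow> (('p fm set \<times> bool) \<times> ('p fm set \<times> bool)) set" where
  "canon_edges c = {((M, a), (N, b)). MCS M \<and> MCS N \<and> canon_acc M N \<and> (live N \<or> b = c)}"

definition canon_R :: "bool \<Rightarrow> (('p fm set \<times> bool) \<times> ('p fm set \<times> bool)) set" where
  "canon_R c = canon_edges c \<union> (canon_edges c)\<inverse>"

definition canon_states :: "('p fm set \<times> bool) set" where
  "canon_states = {(N, b). MCS N}"

definition canon_V :: "'p \<Rightarrow> ('p fm set \<times> bool) set" where
  "canon_V p = {(M, b). MCS M \<and> Atom p \<in> M}"

abbreviation canon_sat :: "'p fm set \<times> bool \<Rightarrow> 'p fm \<Rightarrow> bool" where
  "canon_sat \<equiv> sat (canon_R True) (canon_R False) canon_V"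

lemma canon_R_live_succ:
  "MCS M \<Longrightarrow> live M \<Longrightarrow> ((M, c), (N, b)) \<in> canon_R k \<Longrightarrow> MCS N \<and> canon_acc M N"
  using canon_acc_sym unfolding canon_R_def canon_edges_def by blast

lemma canon_R_dead_succ: "\<not> live M \<Longrightarrow> ((M, c), t) \<in> canon_R k \<Longrightarrow> c = k"
  using canon_acc_live unfolding canon_R_def canon_edges_def by blast

lemma canon_sat_Dot:
  assumes M: "MCS M" and IH: "\<And>N b. MCS N \<Longrightarrow> canon_sat (N, b) \<phi> \<longleftrightarrow> \<phi> \<in> N"
  shows "canon_sat (M, c) (Dot \<phi>) \<longleftrightarrow> Dot \<phi> \<in> M"
proof (cases "live M")
  case False
  then have "Dot \<phi> \<in> M" unfolding live_def by blast
  moreover have "canon_sat (M, c) (Dot \<phi>)"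
    using canon_R_dead_succ[OF False, of c _ True] canon_R_dead_succ[OF False, of c _ False] by auto
  ultimately show ?thesis by blast
next
  case True
  show ?thesis
  proof
    assume sat: "canon_sat (M, c) (Dot \<phi>)"
    show "Dot \<phi> \<in> M"
    proof (rule ccontr)
      assume "Dot \<phi> \<notin> M"
      then obtain N1 N2 where N1: "MCS N1" "canon_acc M N1" "\<phi> \<in> N1"
        and N2: "MCS N2" "canon_acc M N2" "Neg \<phi> \<in> N2"
        using canon_acc_exists[OF M] Dot_Neg_iff[OF M] by metis
      have "((M, c), (N1, True)) \<in> canon_R True" "((M, c), (N2, False)) \<in> canon_R False"
        using M N1 N2 unfolding canon_R_def canon_edges_def by auto
      then have "canon_sat (N1, True) \<phi> \<longleftrightarrow> canon_sat (N2, False) \<phi>"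
        using sat unfolding sat.simps(4) by blast
      then show False using IH N1 N2 MCS_Neg[OF N2(1)] by blast
    qed
  next
    assume "Dot \<phi> \<in> M"
    show "canon_sat (M, c) (Dot \<phi>)"
      unfolding sat.simps(4)
    proof (intro allI impI)
      fix t u
      assume "((M, c), t) \<in> canon_R True" "((M, c), u) \<in> canon_R False"
      moreover obtain N1 b1 N2 b2 where t: "t = (N1, b1)" and u: "u = (N2, b2)" by fastforce
      ultimately have "MCS N1" "canon_acc M N1" "MCS N2" "canon_acc M N2"
        using canon_R_live_succ[OF M True] by blast+
      then have "\<phi> \<in> N1 \<longleftrightarrow> \<phi> \<in> N2"
        using canon_acc_agree[OF M \<open>Dot \<phi> \<in> M\<close>] by blast
      then show "canon_sat t \<phi> \<longleftrightarrow> canon_sat u \<phi>"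
        using IH \<open>MCS N1\<close> \<open>MCS N2\<close> t u by blast
    qed
  qed
qed

lemma canon_truth: "MCS M \<Longrightarrow> canon_sat (M, c) \<phi> \<longleftrightarrow> \<phi> \<in> M"
proof (induction \<phi> arbitrary: M c)
  case (Dot \<phi>)
  then show ?case using canon_sat_Dot by blast
qed (simp_all add: canon_V_def MCS_Neg MCS_Conj)

lemma canon_R_subset: "canon_R c \<subseteq> canon_states \<times> canon_states"
  unfolding canon_states_def canon_R_def canon_edges_def by auto

lemma canon_V_subset: "canon_V p \<subseteq> canon_states"
  unfolding canon_states_def canon_V_def by auto

lemma canon_model:
  fixes M :: "'p fm set"
  assumes "MCS M"
  shows "bimodal_model canon_states (canon_R True) (canon_R False) (canon_V :: 'p \<Rightarrow> _)"
proof -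
  have "(M, True) \<in> canon_states" using assms unfolding canon_states_def by simp
  then show ?thesis unfolding bimodal_model_def using canon_R_subset canon_V_subset by blast
qed

section \<open>Transfer along an injection\<close>

lemma sat_inj_image:
  assumes inj: "inj_on f S" and R: "R1 \<subseteq> S \<times> S" "R2 \<subseteq> S \<times> S"
    and V: "\<forall>p. V p \<subseteq> S" and "s \<in> S"
  shows "sat (map_prod f f ` R1) (map_prod f f ` R2) (\<lambda>p. f ` V p) (f s) \<phi> \<longleftrightarrow> sat R1 R2 V s \<phi>"
  using \<open>s \<in> S\<close>
proof (induction \<phi> arbitrary: s)
  case (Atom p)
  then show ?case using inj V by (simp add: inj_on_image_mem_iff)
next
  case (Dot \<phi>)
  have succ: "(f s, t') \<in> map_prod f f ` R \<longleftrightarrow> (\<exists>t. t' = f t \<and> (s, t) \<in> R)"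
    if "R \<subseteq> S \<times> S" for R t'
  proof
    assume "(f s, t') \<in> map_prod f f ` R"
    then obtain a b where ab: "(a, b) \<in> R" "f s = f a" "t' = f b" by auto
    then have "a = s" using inj that Dot.prems unfolding inj_on_def by blast
    then show "\<exists>t. t' = f t \<and> (s, t) \<in> R" using ab by blast
  qed auto
  have "(s, t) \<in> R1 \<Longrightarrow> t \<in> S" "(s, t) \<in> R2 \<Longrightarrow> t \<in> S" for t using R by auto
  then show ?case unfolding sat.simps succ[OF R(1)] succ[OF R(2)] using Dot.IH by blast
qed simp_all

lemma sym_model_inj_image:
  fixes f :: "'a \<Rightarrow> 'b"
  assumes "inj_on f S" and "bimodal_model S R1 R2 V" and "sym R1" "sym R2"
    and "s \<in> S" and "\<forall>\<phi>\<in>\<Gamma>. sat R1 R2 V s \<phi>"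
  shows "\<exists>(S' :: 'b set) R1' R2' V' s'. bimodal_model S' R1' R2' V' \<and> sym R1' \<and> sym R2' \<and>
           s' \<in> S' \<and> (\<forall>\<phi>\<in>\<Gamma>. sat R1' R2' V' s' \<phi>)"
proof (intro exI conjI)
  have "\<forall>p. f ` V p \<subseteq> f ` S" using assms(2) unfolding bimodal_model_def by (simp add: image_mono)
  then show "bimodal_model (f ` S) (map_prod f f ` R1) (map_prod f f ` R2) (\<lambda>p. f ` V p)"
    using assms(2) unfolding bimodal_model_def by (auto simp: map_prod_def)
  show "sym (map_prod f f ` R1)" "sym (map_prod f f ` R2)"
    using assms(3,4) unfolding sym_def by auto
  show "f s \<in> f ` S" using assms(5) by blast
  show "\<forall>\<phi>\<in>\<Gamma>. sat (map_prod f f ` R1) (map_prod f f ` R2) (\<lambda>p. f ` V p) (f s) \<phi>"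
    using sat_inj_image[OF assms(1)] assms(2,5,6) unfolding bimodal_model_def by blast
qed

text \<open>The states of the theorem are formula sets, so the copy \<open>(N, False)\<close> is represented
  by \<open>Neg ` N\<close>, which is never maximal consistent.\<close>

definition encode :: "'p fm set \<times> bool \<Rightarrow> 'p fm set" where
  "encode = (\<lambda>(N, b). if b then N else Neg ` N)"

lemma Neg_image_not_MCS:
  assumes "MCS N" shows "\<not> MCS (Neg ` N)"
proof
  assume "MCS (Neg ` N)"
  have "Top \<in> N" "Top \<in> Neg ` N"
    using MCS_KBd[OF assms] MCS_KBd[OF \<open>MCS (Neg ` N)\<close>] KBd_tautology[of Top] by simp_all
  txt \<open>\<open>Top\<close> is itself a negation, and its body would have to lie in \<open>N\<close>.\<close>
  then show False using MCS_Neg[OF assms] unfolding Top_def by auto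
qed

lemma MCS_encode_iff: "MCS N \<Longrightarrow> MCS (encode (N, b)) \<longleftrightarrow> b"
  by (simp add: encode_def Neg_image_not_MCS)

lemma inj_on_encode: "inj_on encode (canon_states :: ('p fm set \<times> bool) set)"
proof (rule inj_onI)
  fix x y :: "'p fm set \<times> bool"
  assume "x \<in> canon_states" "y \<in> canon_states" and eq: "encode x = encode y"
  then obtain N b N' b' where x: "x = (N, b)" "MCS N" and y: "y = (N', b')" "MCS N'"
    unfolding canon_states_def by blast
  then have "b = b'" using eq MCS_encode_iff by metis
  moreover have "Neg ` A = Neg ` B \<longleftrightarrow> A = B" for A B :: "'p fm set"
    by (rule inj_image_eq_iff) (simp add: inj_def)
  ultimately show "x = y" using eq x y by (cases b) (simp_all add: encode_def)
qed

theorem mainTheorem16: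
  fixes \<Gamma> :: "'p fm set"
  assumes "KBd_consistent \<Gamma>"
  shows "\<exists>(S :: 'p fm set set) R1 R2 V s.
           bimodal_model S R1 R2 V \<and> sym R1 \<and> sym R2 \<and> s \<in> S \<and>
           (\<forall>\<phi>\<in>\<Gamma>. sat R1 R2 V s \<phi>)"
proof -
  obtain M where "\<Gamma> \<subseteq> M" "MCS M" using Lindenbaum[OF assms] by blast
  then have sat: "\<forall>\<phi>\<in>\<Gamma>. canon_sat (M, True) \<phi>" using canon_truth by blast
  have mem: "(M, True) \<in> canon_states" using \<open>MCS M\<close> unfolding canon_states_def by simp
  have sym: "sym (canon_R c)" for c unfolding canon_R_def by (rule sym_Un_converse)
  show ?thesis
    by (rule sym_model_inj_image[OF inj_on_encode canon_model[OF \<open>MCS M\<close>] sym sym mem sat])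
qed

end
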